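(* Let $G=(V,E)$ be a graph with $m\ge 1$ edges, let $d_v := \deg(v)/(2m)$ for $v\in V$, and let $p^\flat$ be the in-degree distribution of any biased orientation of $G$. Then $$\mathrm{OPT}(G) \ \ge\ \sum_{v\in V} -p^\flat_v \log\frac{\deg(v)}{m} \ =\ H(p^\flat) + D(p^\flat\parallel d) - 1,$$ where $D(p\parallel q) := \sum_{i} p_i\log(p_i/q_i)$ is the relative entropy.
   Context: All graphs are finite, undirected and loopless, but multiple edges are allowed. For an orientation $\vec G$ of $G$, the in-degree distribution is $p_v := \rho_{\vec G}(v)/m$, where $\rho_{\vec G}(v)$ is the in-degree of $v$. Entropy: $H(p) := \sum_{v} -p_v\log p_v$, $\log$ base $2$, $-0\log 0:=0$ (and in the relative entropy terms with $p_i=0$ are $0$). $\mathrm{OPT}(G)$ is the minimum entropy of the in-degree distribution of an orientation of $G$. An orientation is biased if each edge $vw$ with $\deg(v)>\deg(w)$ is oriented toward $v$. *)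

theory Defs
  imports Complex_Main
begin

text \<open>A finite loopless multigraph: vertex set V, edge set E (edge identifiers,
so parallel edges are allowed), and ends e = set of the two endpoints of e.\<close>
definition multigraph :: "'v set \<Rightarrow> 'e set \<Rightarrow> ('e \<Rightarrow> 'v set) \<Rightarrow> bool" where
  "multigraph V E ends \<longleftrightarrow> finite V \<and> finite E \<and>
     (\<forall>e\<in>E. ends e \<subseteq> V \<and> card (ends e) = 2)"

definition degree :: "'e set \<Rightarrow> ('e \<Rightarrow> 'v set) \<Rightarrow> 'v \<Rightarrow> nat" where
  "degree E ends v = card {e\<in>E. v \<in> ends e}"

text \<open>An orientation is given by the head of every edge (the endpoint it points to).\<close>
definition orientation :: "'e set \<Rightarrow> ('e \<Rightarrow> 'v set) \<Rightarrow> ('e \<Rightarrow> 'v) \<Rightarrow> bool" where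
  "orientation E ends h \<longleftrightarrow> (\<forall>e\<in>E. h e \<in> ends e)"

definition indeg :: "'e set \<Rightarrow> ('e \<Rightarrow> 'v) \<Rightarrow> 'v \<Rightarrow> nat" where
  "indeg E h v = card {e\<in>E. h e = v}"

definition indeg_dist :: "'e set \<Rightarrow> ('e \<Rightarrow> 'v) \<Rightarrow> 'v \<Rightarrow> real" where
  "indeg_dist E h v = real (indeg E h v) / real (card E)"

text \<open>Entropy (base 2). Note log 2 0 = 0 in Isabelle, so 0 log 0 = 0 automatically.\<close>
definition entropy :: "'v set \<Rightarrow> ('v \<Rightarrow> real) \<Rightarrow> real" where
  "entropy V p = (\<Sum>v\<in>V. - p v * log 2 (p v))"

text \<open>Relative entropy; terms with p_i = 0 vanish since 0 * x = 0.\<close>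
definition rel_entropy :: "'v set \<Rightarrow> ('v \<Rightarrow> real) \<Rightarrow> ('v \<Rightarrow> real) \<Rightarrow> real" where
  "rel_entropy V p q = (\<Sum>v\<in>V. p v * log 2 (p v / q v))"

definition OPT :: "'v set \<Rightarrow> 'e set \<Rightarrow> ('e \<Rightarrow> 'v set) \<Rightarrow> real" where
  "OPT V E ends = Min ((\<lambda>h. entropy V (indeg_dist E h)) ` {h. orientation E ends h})"

definition biased :: "'e set \<Rightarrow> ('e \<Rightarrow> 'v set) \<Rightarrow> ('e \<Rightarrow> 'v) \<Rightarrow> bool" where
  "biased E ends h \<longleftrightarrow> orientation E ends h \<and>
     (\<forall>e\<in>E. \<forall>v\<in>ends e. \<forall>w\<in>ends e. degree E ends v > degree E ends w \<longrightarrow> h e = v)"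

end

theory Submission
  imports Defs "HOL-Library.FuncSet"
begin

text \<open>
  Proof idea.  Write \<open>H(p, r) = \<Sum>v. - p v * log (r v)\<close> for the cross-entropy of a
  distribution p against a weight function r, and let \<open>r v = deg v / m\<close>.

  (1) For every orientation k the in-degree distribution satisfies
      \<open>p\<^sub>k v \<le> r v\<close>, hence \<open>H(p\<^sub>k) \<ge> H(p\<^sub>k, r)\<close> termwise, by monotonicity of log.
  (2) By double counting, \<open>H(p\<^sub>k, r) = (1/m) \<Sum>e. - log (r (k e))\<close> is a sum over
      edges; a biased orientation points every edge to an endpoint of maximal
      degree, so it minimises every summand.  Hence \<open>H(p\<^sub>k) \<ge> H(p\<^sup>\<flat>, r)\<close> for all k,
      and so \<open>OPT \<ge> H(p\<^sup>\<flat>, r)\<close>.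
  (3) The identity \<open>H(p, c q) = H(p) + D(p \<parallel> q) - log c\<close> for a distribution p,
      applied with \<open>q = d\<close> and \<open>c = 2\<close>, gives the second part of the theorem.
\<close>

definition cross_entropy :: "'v set \<Rightarrow> ('v \<Rightarrow> real) \<Rightarrow> ('v \<Rightarrow> real) \<Rightarrow> real" where
  "cross_entropy V p r = (\<Sum>v\<in>V. - p v * log 2 (r v))"

lemma entropy_ge_cross_entropy_if_dominated:
  assumes "\<And>v. v \<in> V \<Longrightarrow> 0 \<le> p v" and "\<And>v. v \<in> V \<Longrightarrow> p v \<le> r v"
  shows "cross_entropy V p r \<le> entropy V p"
  unfolding cross_entropy_def entropy_def
proof (intro sum_mono)
  fix v assume v: "v \<in> V"
  show "- p v * log 2 (r v) \<le> - p v * log 2 (p v)"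
  proof (cases "p v = 0")
    case False
    then have "0 < p v" using assms(1)[OF v] by simp
    then have "log 2 (p v) \<le> log 2 (r v)" using assms(2)[OF v] by (intro log_mono) auto
    with \<open>0 < p v\<close> show ?thesis by (simp add: mult_left_mono)
  qed simp
qed

lemma cross_entropy_scaled_decomposition:
  assumes fin: "finite V" and c: "0 < c"
    and nonneg: "\<And>v. v \<in> V \<Longrightarrow> 0 \<le> p v"
    and supp: "\<And>v. v \<in> V \<Longrightarrow> 0 < p v \<Longrightarrow> 0 < q v"
    and total: "(\<Sum>v\<in>V. p v) = 1"
  shows "cross_entropy V p (\<lambda>v. c * q v) = entropy V p + rel_entropy V p q - log 2 c"
proof -
  have termwise: "- p v * log 2 (c * q v) = - p v * log 2 (p v) + p v * log 2 (p v / q v) - p v * log 2 c"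
    if v: "v \<in> V" for v
  proof (cases "p v = 0")
    case False
    then have "0 < p v" using nonneg[OF v] by simp
    moreover have "0 < q v" using supp[OF v \<open>0 < p v\<close>] .
    ultimately have log_split: "log 2 (c * q v) = log 2 c + log 2 (p v) - log 2 (p v / q v)"
      using c by (simp add: log_mult log_divide)
    show ?thesis unfolding log_split by (simp add: algebra_simps)
  qed simp
  have "cross_entropy V p (\<lambda>v. c * q v)
      = (\<Sum>v\<in>V. - p v * log 2 (p v) + p v * log 2 (p v / q v) - p v * log 2 c)"
    unfolding cross_entropy_def by (intro sum.cong refl termwise)
  also have "\<dots> = entropy V p + rel_entropy V p q - (\<Sum>v\<in>V. p v) * log 2 c"
    by (simp add: entropy_def rel_entropy_def sum.distrib sum_subtractf sum_distrib_right sum_negf)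
  finally show ?thesis using total by simp
qed

lemma sum_indeg_weighted:
  assumes "finite V" "finite E" "h ` E \<subseteq> V"
  shows "(\<Sum>v\<in>V. real (indeg E h v) * f v) = (\<Sum>e\<in>E. f (h e))"
proof -
  have "(\<Sum>e\<in>E. f (h e)) = (\<Sum>v\<in>V. \<Sum>e\<in>{e\<in>E. h e = v}. f (h e))"
    using sum.group[OF assms(2,1,3), of "\<lambda>e. f (h e)"] by simp
  also have "\<dots> = (\<Sum>v\<in>V. \<Sum>e\<in>{e\<in>E. h e = v}. f v)"
    by (intro sum.cong) auto
  also have "\<dots> = (\<Sum>v\<in>V. real (indeg E h v) * f v)"
    by (simp add: indeg_def)
  finally show ?thesis by simp
qed

lemma orientation_heads_in_vertices:
  assumes "multigraph V E ends" "orientation E ends k"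
  shows "k ` E \<subseteq> V"
  using assms by (auto simp: multigraph_def orientation_def)

lemma indeg_dist_sum:
  assumes "multigraph V E ends" "orientation E ends k" "card E \<ge> 1"
  shows "(\<Sum>v\<in>V. indeg_dist E k v) = 1"
proof -
  have fin: "finite V" "finite E" using assms(1) by (auto simp: multigraph_def)
  have "(\<Sum>v\<in>V. indeg_dist E k v) = (\<Sum>v\<in>V. real (indeg E k v) * (1 / real (card E)))"
    by (simp add: indeg_dist_def)
  also have "\<dots> = (\<Sum>e\<in>E. 1 / real (card E))"
    using sum_indeg_weighted[OF fin orientation_heads_in_vertices[OF assms(1,2)]] .
  also have "\<dots> = 1" using assms(3) by simp
  finally show ?thesis .
qed

lemma indeg_le_degree:
  assumes "finite E" "orientation E ends k"
  shows "indeg E k v \<le> degree E ends v"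
  unfolding indeg_def degree_def
  using assms by (intro card_mono) (auto simp: orientation_def)

lemma indeg_dist_le_degree_ratio:
  assumes "finite E" "orientation E ends k"
  shows "indeg_dist E k v \<le> real (degree E ends v) / real (card E)"
  unfolding indeg_dist_def
  using indeg_le_degree[OF assms] by (intro divide_right_mono) auto

lemma degree_head_pos:
  assumes "finite E" "orientation E ends k" "e \<in> E"
  shows "0 < degree E ends (k e)"
proof -
  have "e \<in> {e'\<in>E. k e \<in> ends e'}" using assms by (auto simp: orientation_def)
  then show ?thesis unfolding degree_def using assms(1) card_gt_0_iff by fastforce
qed

lemma biased_head_max_degree:
  assumes "biased E ends h" "orientation E ends k" "e \<in> E"
  shows "degree E ends (k e) \<le> degree E ends (h e)"
proof (rule ccontr)
  assume "\<not> ?thesis"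
  then have less: "degree E ends (h e) < degree E ends (k e)" by simp
  moreover have "k e \<in> ends e" "h e \<in> ends e"
    using assms by (auto simp: biased_def orientation_def)
  ultimately have "h e = k e" using assms(1,3) unfolding biased_def by blast
  with less show False by simp
qed

lemma cross_entropy_indeg_dist:
  assumes "multigraph V E ends" "orientation E ends k"
  shows "cross_entropy V (indeg_dist E k) r = (\<Sum>e\<in>E. - log 2 (r (k e)) / real (card E))"
proof -
  have fin: "finite V" "finite E" using assms(1) by (auto simp: multigraph_def)
  have "cross_entropy V (indeg_dist E k) r
      = (\<Sum>v\<in>V. real (indeg E k v) * (- log 2 (r v) / real (card E)))"
    unfolding cross_entropy_def indeg_dist_def by (intro sum.cong) auto
  also have "\<dots> = (\<Sum>e\<in>E. - log 2 (r (k e)) / real (card E))"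
    using sum_indeg_weighted[OF fin orientation_heads_in_vertices[OF assms]] .
  finally show ?thesis .
qed

lemma biased_minimises_degree_cross_entropy:
  assumes G: "multigraph V E ends" and h: "biased E ends h" and k: "orientation E ends k"
  defines "r \<equiv> \<lambda>v. real (degree E ends v) / real (card E)"
  shows "cross_entropy V (indeg_dist E h) r \<le> cross_entropy V (indeg_dist E k) r"
proof -
  have fE: "finite E" using G by (simp add: multigraph_def)
  have h_or: "orientation E ends h" using h by (simp add: biased_def)
  have "- log 2 (r (h e)) / real (card E) \<le> - log 2 (r (k e)) / real (card E)" if e: "e \<in> E" for e
  proof -
    have "0 < r (k e)"
      using degree_head_pos[OF fE k e] e fE by (auto simp: r_def card_gt_0_iff intro!: divide_pos_pos)
    moreover have "r (k e) \<le> r (h e)"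
      unfolding r_def using biased_head_max_degree[OF h k e] by (intro divide_right_mono) auto
    ultimately have "log 2 (r (k e)) \<le> log 2 (r (h e))" by (intro log_mono) auto
    then show ?thesis by (intro divide_right_mono) auto
  qed
  then show ?thesis
    unfolding cross_entropy_indeg_dist[OF G h_or] cross_entropy_indeg_dist[OF G k]
    by (rule sum_mono)
qed

text \<open>Only finitely many in-degree distributions arise (restricting to E does not
  change them), so OPT is a genuine minimum and every common lower bound bounds it.\<close>
lemma OPT_lower_bound:
  assumes G: "multigraph V E ends" and ex: "orientation E ends h"
    and bound: "\<And>k. orientation E ends k \<Longrightarrow> c \<le> entropy V (indeg_dist E k)"
  shows "c \<le> OPT V E ends"
proof -
  let ?F = "\<lambda>k. entropy V (indeg_dist E k)"
  have restrict: "?F k = ?F (restrict k E)" for k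
  proof -
    have "indeg E (restrict k E) v = indeg E k v" for v
      unfolding indeg_def by (rule arg_cong[where f = card]) auto
    then have "indeg_dist E (restrict k E) = indeg_dist E k"
      by (intro ext) (simp add: indeg_dist_def)
    then show ?thesis by simp
  qed
  have "?F ` {k. orientation E ends k} \<subseteq> ?F ` (E \<rightarrow>\<^sub>E V)"
  proof
    fix x assume "x \<in> ?F ` {k. orientation E ends k}"
    then obtain k where k: "orientation E ends k" and x: "x = ?F k" by blast
    have "restrict k E \<in> E \<rightarrow>\<^sub>E V" using orientation_heads_in_vertices[OF G k] by auto
    then show "x \<in> ?F ` (E \<rightarrow>\<^sub>E V)" using x restrict by blast
  qed
  moreover have "finite (E \<rightarrow>\<^sub>E V)" using G by (intro finite_PiE) (auto simp: multigraph_def)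
  ultimately have "finite (?F ` {k. orientation E ends k})" by (meson finite_imageI finite_subset)
  then show ?thesis
    unfolding OPT_def using ex bound by (subst Min_ge_iff) auto
qed

theorem mainTheorem4:
  fixes V :: "'v set" and E :: "'e set" and ends :: "'e \<Rightarrow> 'v set" and h :: "'e \<Rightarrow> 'v"
  assumes "multigraph V E ends"
    and "card E \<ge> 1"
    and "biased E ends h"
  shows "OPT V E ends \<ge>
           (\<Sum>v\<in>V. - indeg_dist E h v * log 2 (real (degree E ends v) / real (card E)))
       \<and> (\<Sum>v\<in>V. - indeg_dist E h v * log 2 (real (degree E ends v) / real (card E)))
           = entropy V (indeg_dist E h)
             + rel_entropy V (indeg_dist E h) (\<lambda>v. real (degree E ends v) / (2 * real (card E))) - 1"
proof -
  define r where "r = (\<lambda>v. real (degree E ends v) / real (card E))"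
  define d where "d = (\<lambda>v. real (degree E ends v) / (2 * real (card E)))"
  have fin: "finite V" "finite E" using assms(1) by (auto simp: multigraph_def)
  have h_or: "orientation E ends h" using assms(3) by (simp add: biased_def)
  have nonneg: "0 \<le> indeg_dist E k v" for k v by (simp add: indeg_dist_def)
  have "cross_entropy V (indeg_dist E h) r \<le> entropy V (indeg_dist E k)"
    if k: "orientation E ends k" for k
    using biased_minimises_degree_cross_entropy[OF assms(1,3) k]
      entropy_ge_cross_entropy_if_dominated[of V "indeg_dist E k" r]
      nonneg indeg_dist_le_degree_ratio[OF fin(2) k]
    unfolding r_def by fastforce
  then have part1: "cross_entropy V (indeg_dist E h) r \<le> OPT V E ends"
    using OPT_lower_bound[OF assms(1) h_or] by blast
  have d_pos: "0 < d v" if "0 < indeg_dist E h v" for v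
    using that indeg_dist_le_degree_ratio[OF fin(2) h_or, of v] assms(2)
    by (simp add: d_def divide_pos_pos)
  have "cross_entropy V (indeg_dist E h) (\<lambda>v. 2 * d v)
      = entropy V (indeg_dist E h) + rel_entropy V (indeg_dist E h) d - log 2 2"
    by (rule cross_entropy_scaled_decomposition[OF fin(1) _ nonneg d_pos
          indeg_dist_sum[OF assms(1) h_or assms(2)]]) simp
  moreover have "(\<lambda>v. 2 * d v) = r" by (simp add: d_def r_def)
  ultimately show ?thesis using part1 unfolding cross_entropy_def r_def d_def by simp
qed

end
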